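(* Let $(\mathcal{N},d)$ be a complete global Alexandrov NPC space and $T:\mathcal{N}\to\mathcal{N}$ a nonexpansive distance convex mapping. Then, for any $p\in\mathcal{N}$ whose orbit $\{p,Tp,T^2p,\ldots\}$ is bounded, and any $q\in\mathcal{N}$, the following are equivalent: (i) $Tq=q$ and $q\in\overline{co}\{p,Tp,T^2p,\ldots\}$; (ii) $q=\lim_{n\to\infty} m_n(p)$ (convergence in the metric $d$); (iii) $q$ is the weak limit of the sequence $(m_n(p))$; (iv) $q$ is a weak cluster point of the sequence $(m_n(p))$.
   Context: A metric space $(\mathcal{N},d)$ is a geodesic length space if any two points $p,q$ are joined by a rectifiable curve $\gamma:[0,1]\to\mathcal{N}$ with $\gamma(0)=p$, $\gamma(1)=q$ of length $d(p,q)$ (a geodesic). It is a global Alexandrov NPC space if for all $q\in\mathcal{N}$, every geodesic $\gamma:[0,1]\to\mathcal{N}$ and $0\le t\le 1$: $d^2(q,\gamma(t))\le (1-t)d^2(q,\gamma(0))+t d^2(q,\gamma(1))-t(1-t)l(\gamma)^2$, where $l(\gamma)$ is the length of $\gamma$. In such spaces geodesics between two points are unique. A subset is convex if any two of its points are joined by a geodesic contained in it; $co(S)$ is the smallest convex set containing $S$, and $\overline{co}(S)$ its closure. $T$ is nonexpansive if $d(Tp,Tq)\le d(p,q)$ for all $p,q$. For $r,p\in\mathcal{N}$ and $n\ge1$ let $F_n(r,p)=\frac1n\sum_{i=0}^{n-1}d^2(r,T^ip)$, and let $m_n(p)$ be the unique minimizer of $F_n(\cdot,p)$ (it exists in a complete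 global Alexandrov NPC space). $T$ is distance convex if for all $n\in\mathbb{N}$ and $q\in\mathcal{N}$ the function $r\mapsto d^2(m_n(r),q)$ is convex on $\mathcal{N}$, i.e. its composition with every geodesic $[0,1]\to\mathcal{N}$ is convex. For $x\in\mathcal{N}$ and a geodesic arc $\gamma$, the projection $\pi(x,\gamma)$ is the unique point of $\gamma$ closest to $x$. A sequence $(p_n)$ converges weakly to $q$ if for every geodesic arc $\gamma$ through $q$, $\pi(p_n,\gamma)\to q$. A point $q$ is a weak cluster point of $(p_n)$ if for every neighborhood $U$ of $q$ there are infinitely many $n$ such that $\pi(p_n,\gamma)\in U$ for every geodesic arc $\gamma$ through $q$. *)

theory Defs
  imports "HOL-Analysis.Analysis"
begin

text \<open>Geodesics, parametrised on [0,1] proportionally to arc length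
  (constant speed), so that the length of the curve equals dist (g 0) (g 1).\<close>
definition geodesic :: "(real \<Rightarrow> 'a::metric_space) \<Rightarrow> bool" where
  "geodesic g \<longleftrightarrow>
     (\<forall>s\<in>{0..1}. \<forall>t\<in>{0..1}. dist (g s) (g t) = \<bar>s - t\<bar> * dist (g 0) (g 1))"

definition geodesic_length_space :: "'a::metric_space itself \<Rightarrow> bool" where
  "geodesic_length_space _ \<longleftrightarrow>
     (\<forall>p q::'a. \<exists>g. geodesic g \<and> g 0 = p \<and> g 1 = q)"

definition NPC_space :: "'a::metric_space itself \<Rightarrow> bool" where
  "NPC_space X \<longleftrightarrow> geodesic_length_space X \<and>
     (\<forall>(q::'a) g t. geodesic g \<and> t \<in> {0..1} \<longrightarrow>
        (dist q (g t))\<^sup>2 \<le> (1 - t) * (dist q (g 0))\<^sup>2 + t * (dist q (g 1))\<^sup>2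
                            - t * (1 - t) * (dist (g 0) (g 1))\<^sup>2)"

definition geo_convex :: "'a::metric_space set \<Rightarrow> bool" where
  "geo_convex S \<longleftrightarrow>
     (\<forall>p\<in>S. \<forall>q\<in>S. \<exists>g. geodesic g \<and> g 0 = p \<and> g 1 = q \<and> g ` {0..1} \<subseteq> S)"

definition geo_co :: "'a::metric_space set \<Rightarrow> 'a set" where
  "geo_co S = \<Inter>{C. geo_convex C \<and> S \<subseteq> C}"

definition nonexpansive :: "('a::metric_space \<Rightarrow> 'a) \<Rightarrow> bool" where
  "nonexpansive T \<longleftrightarrow> (\<forall>p q. dist (T p) (T q) \<le> dist p q)"

definition Fn :: "('a::metric_space \<Rightarrow> 'a) \<Rightarrow> nat \<Rightarrow> 'a \<Rightarrow> 'a \<Rightarrow> real" where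
  "Fn T n r p = (1 / real n) * (\<Sum>i<n. (dist r ((T ^^ i) p))\<^sup>2)"

definition mn :: "('a::metric_space \<Rightarrow> 'a) \<Rightarrow> nat \<Rightarrow> 'a \<Rightarrow> 'a" where
  "mn T n p = (THE r. \<forall>r'. Fn T n r p \<le> Fn T n r' p)"

definition distance_convex :: "('a::metric_space \<Rightarrow> 'a) \<Rightarrow> bool" where
  "distance_convex T \<longleftrightarrow>
     (\<forall>n\<ge>1. \<forall>q g. geodesic g \<longrightarrow> convex_on {0..1} (\<lambda>t. (dist (mn T n (g t)) q)\<^sup>2))"

definition geo_proj :: "'a::metric_space \<Rightarrow> (real \<Rightarrow> 'a) \<Rightarrow> 'a" where
  "geo_proj x g = (THE y. y \<in> g ` {0..1} \<and> (\<forall>z\<in>g ` {0..1}. dist x y \<le> dist x z))"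

definition weak_limit :: "(nat \<Rightarrow> 'a::metric_space) \<Rightarrow> 'a \<Rightarrow> bool" where
  "weak_limit p q \<longleftrightarrow>
     (\<forall>g. geodesic g \<and> q \<in> g ` {0..1} \<longrightarrow> (\<lambda>n. geo_proj (p n) g) \<longlonglongrightarrow> q)"

definition weak_cluster_point :: "(nat \<Rightarrow> 'a::metric_space) \<Rightarrow> 'a \<Rightarrow> bool" where
  "weak_cluster_point p q \<longleftrightarrow>
     (\<forall>U. open U \<and> q \<in> U \<longrightarrow>
        infinite {n. \<forall>g. geodesic g \<and> q \<in> g ` {0..1} \<longrightarrow> geo_proj (p n) g \<in> U})"

end

theory Submission
  imports Defs
begin

text \<open>In an NPC space the squared distance to a point is uniformly convex along geodesics, hence
  so is the mean \<open>F\<^sub>n(-,p)\<close>. A continuous uniformly convex function attains its infimum on the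
  closure of a convex set, at a point \<open>m\<close> satisfying \<open>f m + d(m,z)\<^sup>2 \<le> f z\<close>; this yields both
  nearest-point projections and the minimisers \<open>m\<^sub>n\<close>. For a bounded orbit the same inequality
  gives \<open>d(m\<^sub>n p, m\<^sub>n (T\<^sup>k p))\<^sup>2 = O(k/n)\<close> and \<open>d(T (m\<^sub>n p), m\<^sub>n p)\<^sup>2 = O(1/n)\<close>, and \<open>m\<^sub>n p\<close> lies
  in the closed convex hull \<open>K\<close> of the orbit.

  If \<open>q \<in> K\<close> is fixed, approximate it by some \<open>r\<close> in the convex hull of finitely many orbit
  points. Distance convexity makes the sublevel sets of \<open>s \<mapsto> d(m\<^sub>n s, m\<^sub>n p)\<close> convex, so
  \<open>d(m\<^sub>n r, m\<^sub>n p) \<rightarrow> 0\<close>, while \<open>d(m\<^sub>n r, q) \<le> d(r, q)\<close> because \<open>q\<close> is fixed. Conversely, a weak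
  cluster point is a metric cluster point (project onto the geodesic from \<open>q\<close> to \<open>m\<^sub>n p\<close>), and
  a cluster point of the approximate fixed points \<open>m\<^sub>n p\<close> is a fixed point in \<open>K\<close>; a weak limit
  stays in the closed convex set \<open>K\<close> and is fixed by demiclosedness of \<open>I - T\<close>.\<close>

section \<open>Geodesics\<close>

lemma geodesic_dist:
  assumes "geodesic g" "s \<in> {0..1}" "t \<in> {0..1}"
  shows "dist (g s) (g t) = \<bar>s - t\<bar> * dist (g 0) (g 1)"
  using assms unfolding geodesic_def by blast

lemma geodesic_dist_start:
  assumes "geodesic g" "t \<in> {0..1}"
  shows "dist (g 0) (g t) = t * dist (g 0) (g 1)"
  using geodesic_dist[OF assms(1) _ assms(2), of 0] assms(2) by simp

lemma geodesic_dist_end: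
  assumes "geodesic g" "t \<in> {0..1}"
  shows "dist (g t) (g 1) = (1 - t) * dist (g 0) (g 1)"
  using geodesic_dist[OF assms, of 1] assms(2) by simp

lemma geodesic_lipschitz_on: "geodesic g \<Longrightarrow> (dist (g 0) (g 1))-lipschitz_on {0..1} g"
proof (rule lipschitz_onI)
  fix s t :: real assume "geodesic g" "s \<in> {0..1}" "t \<in> {0..1}"
  then show "dist (g s) (g t) \<le> dist (g 0) (g 1) * dist s t"
    by (simp only: geodesic_dist dist_real_def mult.commute order.refl)
qed simp

lemma closed_geodesic_image: "geodesic g \<Longrightarrow> closed (g ` {0..1})"
  by (intro compact_imp_closed compact_continuous_image
      lipschitz_on_continuous_on[OF geodesic_lipschitz_on]) auto

lemma segment_unit_interval:
  "u \<in> {0..1} \<Longrightarrow> s \<in> {0..1} \<Longrightarrow> t \<in> {0..1} \<Longrightarrow> (1 - t) * u + t * s \<in> {0..1::real}"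
  using convex_bound_le[of u 1 s "1 - t" t] by auto

lemma geodesic_reparam:
  assumes "geodesic g" "u \<in> {0..1}" "s \<in> {0..1}"
  shows "geodesic (\<lambda>t. g ((1 - t) * u + t * s))"
  unfolding geodesic_def
proof (intro ballI)
  fix a b :: real assume a: "a \<in> {0..1}" and b: "b \<in> {0..1}"
  have "(1 - a) * u + a * s - ((1 - b) * u + b * s) = (a - b) * (s - u)" by algebra
  then have "dist (g ((1 - a) * u + a * s)) (g ((1 - b) * u + b * s))
      = \<bar>a - b\<bar> * (\<bar>s - u\<bar> * dist (g 0) (g 1))"
    using geodesic_dist[OF assms(1) segment_unit_interval[OF assms(2,3) a]
        segment_unit_interval[OF assms(2,3) b]] by (simp add: abs_mult)
  also have "\<bar>s - u\<bar> * dist (g 0) (g 1) = dist (g u) (g s)"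
    using geodesic_dist[OF assms] by (simp add: abs_minus_commute)
  finally show "dist (g ((1 - a) * u + a * s)) (g ((1 - b) * u + b * s))
      = \<bar>a - b\<bar> * dist (g ((1 - 0) * u + 0 * s)) (g ((1 - 1) * u + 1 * s))" by simp
qed

lemma geo_convex_geodesic_image:
  assumes "geodesic g"
  shows "geo_convex (g ` {0..1})"
  unfolding geo_convex_def
proof (intro ballI)
  fix a b assume "a \<in> g ` {0..1}" "b \<in> g ` {0..1}"
  then obtain u s where u: "u \<in> {0..1}" "a = g u" and s: "s \<in> {0..1}" "b = g s" by auto
  let ?h = "\<lambda>t. g ((1 - t) * u + t * s)"
  have "?h ` {0..1} \<subseteq> g ` {0..1}" using segment_unit_interval[OF u(1) s(1)] by auto
  with geodesic_reparam[OF assms u(1) s(1)] u(2) s(2)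
  show "\<exists>h. geodesic h \<and> h 0 = a \<and> h 1 = b \<and> h ` {0..1} \<subseteq> g ` {0..1}"
    by (intro exI[of _ ?h]) simp
qed

section \<open>Uniform convexity and convex hulls in NPC spaces\<close>

lemma NPC_geodesic_exists:
  assumes "NPC_space TYPE('a::metric_space)"
  obtains g where "geodesic g" "g 0 = (a::'a)" "g 1 = b"
  using assms unfolding NPC_space_def geodesic_length_space_def by blast

definition geo_uniformly_convex :: "('a::metric_space \<Rightarrow> real) \<Rightarrow> bool" where
  "geo_uniformly_convex f \<longleftrightarrow>
     (\<forall>g t. geodesic g \<and> t \<in> {0..1} \<longrightarrow>
        f (g t) \<le> (1 - t) * f (g 0) + t * f (g 1) - t * (1 - t) * (dist (g 0) (g 1))\<^sup>2)"

lemma geo_uniformly_convexD: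
  "geo_uniformly_convex f \<Longrightarrow> geodesic g \<Longrightarrow> t \<in> {0..1} \<Longrightarrow>
     f (g t) \<le> (1 - t) * f (g 0) + t * f (g 1) - t * (1 - t) * (dist (g 0) (g 1))\<^sup>2"
  unfolding geo_uniformly_convex_def by blast

lemma NPC_geo_uniformly_convex_dist:
  "NPC_space TYPE('a::metric_space) \<Longrightarrow> geo_uniformly_convex (\<lambda>x::'a. (dist q x)\<^sup>2)"
  unfolding NPC_space_def geo_uniformly_convex_def by blast

lemma geo_uniformly_convex_average:
  fixes f :: "'i \<Rightarrow> 'a::metric_space \<Rightarrow> real"
  assumes "finite I" "I \<noteq> {}" "\<And>i. i \<in> I \<Longrightarrow> geo_uniformly_convex (f i)"
  shows "geo_uniformly_convex (\<lambda>x. (\<Sum>i\<in>I. f i x) / card I)"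
  unfolding geo_uniformly_convex_def
proof (intro allI impI)
  fix g :: "real \<Rightarrow> 'a" and t :: real assume g: "geodesic g \<and> t \<in> {0..1}"
  let ?D = "t * (1 - t) * (dist (g 0) (g 1))\<^sup>2"
  have "(\<Sum>i\<in>I. f i (g t)) \<le> (\<Sum>i\<in>I. (1 - t) * f i (g 0) + t * f i (g 1) - ?D)"
    using g assms(3) by (intro sum_mono) (simp add: geo_uniformly_convexD)
  also have "\<dots> = (1 - t) * (\<Sum>i\<in>I. f i (g 0)) + t * (\<Sum>i\<in>I. f i (g 1)) - card I * ?D"
    by (simp add: sum.distrib sum_subtractf sum_distrib_left)
  finally have "(\<Sum>i\<in>I. f i (g t)) / card I
      \<le> ((1 - t) * (\<Sum>i\<in>I. f i (g 0)) + t * (\<Sum>i\<in>I. f i (g 1)) - card I * ?D) / card I"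
    by (rule divide_right_mono) simp
  also have "\<dots> = (1 - t) * ((\<Sum>i\<in>I. f i (g 0)) / card I)
      + t * ((\<Sum>i\<in>I. f i (g 1)) / card I) - ?D"
    using assms(1,2) by (simp add: diff_divide_distrib add_divide_distrib)
  finally show "(\<Sum>i\<in>I. f i (g t)) / card I \<le> (1 - t) * ((\<Sum>i\<in>I. f i (g 0)) / card I)
      + t * ((\<Sum>i\<in>I. f i (g 1)) / card I) - ?D" .
qed

lemma NPC_geodesic_unique:
  assumes "NPC_space TYPE('a::metric_space)" "geodesic (g :: real \<Rightarrow> 'a)" "geodesic h"
    "g 0 = h 0" "g 1 = h 1" "t \<in> {0..1}"
  shows "g t = h t"
proof -
  have "(dist (h t) (g t))\<^sup>2 \<le> (1 - t) * (dist (h t) (g 0))\<^sup>2 + t * (dist (h t) (g 1))\<^sup>2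
      - t * (1 - t) * (dist (g 0) (g 1))\<^sup>2"
    by (rule geo_uniformly_convexD[OF NPC_geo_uniformly_convex_dist[OF assms(1)] assms(2,6)])
  also have "dist (h t) (g 0) = t * dist (g 0) (g 1)"
    using geodesic_dist_start[OF assms(3,6)] assms(4,5) by (simp add: dist_commute)
  also have "dist (h t) (g 1) = (1 - t) * dist (g 0) (g 1)"
    using geodesic_dist_end[OF assms(3,6)] assms(4,5) by simp
  also have "(1 - t) * (t * dist (g 0) (g 1))\<^sup>2 + t * ((1 - t) * dist (g 0) (g 1))\<^sup>2
      - t * (1 - t) * (dist (g 0) (g 1))\<^sup>2 = 0"
    by (simp add: power2_eq_square algebra_simps)
  finally show ?thesis by simp
qed

lemma NPC_geo_convex_UNIV: "NPC_space TYPE('a::metric_space) \<Longrightarrow> geo_convex (UNIV :: 'a set)"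
  unfolding geo_convex_def by (metis NPC_geodesic_exists subset_UNIV)

lemma NPC_geo_convex_Inter:
  assumes "NPC_space TYPE('a::metric_space)" "\<And>C. C \<in> F \<Longrightarrow> geo_convex (C::'a set)"
  shows "geo_convex (\<Inter>F)"
  unfolding geo_convex_def
proof (intro ballI)
  fix a b assume a: "a \<in> \<Inter>F" and b: "b \<in> \<Inter>F"
  obtain g where g: "geodesic g" "g 0 = a" "g 1 = b" using NPC_geodesic_exists[OF assms(1)] .
  have "g ` {0..1} \<subseteq> C" if C: "C \<in> F" for C
  proof -
    obtain h where h: "geodesic h" "h 0 = a" "h 1 = b" "h ` {0..1} \<subseteq> C"
      using assms(2)[OF C] a b C unfolding geo_convex_def by blast
    have "g t = h t" if "t \<in> {0..1}" for t
      using NPC_geodesic_unique[OF assms(1) g(1) h(1) _ _ that] g h by simp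
    then show ?thesis using h(4) by auto
  qed
  with g show "\<exists>g. geodesic g \<and> g 0 = a \<and> g 1 = b \<and> g ` {0..1} \<subseteq> \<Inter>F" by blast
qed

lemma NPC_geo_convex_geo_co:
  "NPC_space TYPE('a::metric_space) \<Longrightarrow> geo_convex (geo_co (S::'a set))"
  unfolding geo_co_def by (rule NPC_geo_convex_Inter) auto

lemma geo_co_superset: "S \<subseteq> geo_co S"
  unfolding geo_co_def by auto

lemma geo_co_least: "geo_convex C \<Longrightarrow> S \<subseteq> C \<Longrightarrow> geo_co S \<subseteq> C"
  unfolding geo_co_def by auto

lemma geo_co_mono: "A \<subseteq> B \<Longrightarrow> geo_co A \<subseteq> geo_co B"
  unfolding geo_co_def by auto

lemma geo_co_range_finite_stage:
  assumes "NPC_space TYPE('a::metric_space)" and "r \<in> geo_co (range (x :: nat \<Rightarrow> 'a))"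
  shows "\<exists>N. r \<in> geo_co (x ` {..N})"
proof -
  define U where "U = (\<Union>N. geo_co (x ` {..N}))"
  have "geo_convex U" unfolding geo_convex_def
  proof (intro ballI)
    fix a b assume "a \<in> U" "b \<in> U"
    then obtain N1 N2 where "a \<in> geo_co (x ` {..N1})" "b \<in> geo_co (x ` {..N2})"
      unfolding U_def by blast
    moreover have "geo_co (x ` {..N}) \<subseteq> geo_co (x ` {..max N1 N2})" if "N \<le> max N1 N2" for N
      using that by (intro geo_co_mono image_mono) auto
    ultimately have "a \<in> geo_co (x ` {..max N1 N2})" "b \<in> geo_co (x ` {..max N1 N2})"
      by (meson max.cobounded1 max.cobounded2 subsetD)+
    then obtain h where "geodesic h" "h 0 = a" "h 1 = b" "h ` {0..1} \<subseteq> geo_co (x ` {..max N1 N2})"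
      using NPC_geo_convex_geo_co[OF assms(1)] unfolding geo_convex_def by blast
    then show "\<exists>h. geodesic h \<and> h 0 = a \<and> h 1 = b \<and> h ` {0..1} \<subseteq> U"
      unfolding U_def by blast
  qed
  moreover have "range x \<subseteq> U"
    using geo_co_superset unfolding U_def by fastforce
  ultimately show ?thesis
    using geo_co_least assms(2) unfolding U_def by blast
qed

section \<open>Minimising uniformly convex functions\<close>

lemma le_if_one_minus_mult_le:
  fixes A B :: real
  assumes "\<And>t. 0 < t \<Longrightarrow> t \<le> 1 \<Longrightarrow> (1 - t) * B \<le> A"
  shows "B \<le> A"
proof (rule ccontr)
  assume "\<not> B \<le> A"
  moreover have "0 \<le> A" using assms[of 1] by simp
  ultimately have "0 < (B - A) / (2 * B)" "(B - A) / (2 * B) \<le> 1" "A < B" "0 < B"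
    by (simp_all add: field_simps)
  moreover have "(1 - (B - A) / (2 * B)) * B = (A + B) / 2"
    using \<open>0 < B\<close> by (simp add: field_simps)
  ultimately show False using assms[of "(B - A) / (2 * B)"] by simp
qed

lemma geo_uniformly_convex_attains_inf:
  fixes f :: "'a::complete_space \<Rightarrow> real"
  assumes uc: "geo_uniformly_convex f" and cv: "geo_convex C" and ne: "C \<noteq> {}"
    and cont: "continuous_on UNIV f" and bdd: "bdd_below (f ` C)"
  shows "\<exists>y\<in>closure C. \<forall>c\<in>C. f y \<le> f c"
proof -
  define \<delta> where "\<delta> = Inf (f ` C)"
  have inf_le: "\<delta> \<le> f c" if "c \<in> C" for c
    unfolding \<delta>_def using that bdd by (rule cInf_lower[OF imageI])
  define \<epsilon> where "\<epsilon> k = inverse (real (Suc k))" for k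
  have "\<exists>c\<in>C. f c < \<delta> + \<epsilon> k" for k
    using cInf_lessD[of "f ` C" "\<delta> + \<epsilon> k"] ne by (auto simp: \<delta>_def \<epsilon>_def)
  then obtain s where sC: "\<And>k. s k \<in> C" and s: "\<And>k. f (s k) < \<delta> + \<epsilon> k"
    by metis
  have dist_s: "(dist (s i) (s j))\<^sup>2 < 2 * \<epsilon> i + 2 * \<epsilon> j" for i j
  proof -
    obtain h where h: "geodesic h" "h 0 = s i" "h 1 = s j" "h ` {0..1} \<subseteq> C"
      using cv sC unfolding geo_convex_def by meson
    have "\<delta> \<le> f (h (1/2))" using h(4) by (intro inf_le) auto
    also have "\<dots> \<le> (f (s i) + f (s j)) / 2 - (dist (s i) (s j))\<^sup>2 / 4"
      using geo_uniformly_convexD[OF uc h(1), of "1/2"] h(2,3) by (simp add: add_divide_distrib)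
    finally show ?thesis using s[of i] s[of j] by (simp add: field_simps)
  qed
  have "Cauchy s"
  proof (rule metric_CauchyI)
    fix e :: real assume e: "0 < e"
    obtain M :: nat where "4 / e\<^sup>2 < real M" using reals_Archimedean2 by blast
    then have M: "4 / e\<^sup>2 < real (Suc M)" by simp
    have "4 * \<epsilon> M < e\<^sup>2"
      using M e by (simp add: \<epsilon>_def field_simps)
    moreover have \<epsilon>_le: "\<epsilon> n \<le> \<epsilon> M" if "M \<le> n" for n
      using that by (simp add: \<epsilon>_def le_imp_inverse_le)
    ultimately have "dist (s m) (s n) < e" if "M \<le> m" "M \<le> n" for m n
    proof -
      have "(dist (s m) (s n))\<^sup>2 < e\<^sup>2"
        using dist_s[of m n] \<epsilon>_le[OF that(1)] \<epsilon>_le[OF that(2)] \<open>4 * \<epsilon> M < e\<^sup>2\<close> by linarith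
      then show ?thesis by (rule power_less_imp_less_base) (use e in simp)
    qed
    then show "\<exists>M. \<forall>m\<ge>M. \<forall>n\<ge>M. dist (s m) (s n) < e" by blast
  qed
  then obtain y where y: "s \<longlonglongrightarrow> y" using Cauchy_convergent_iff convergent_def by blast
  have "(\<lambda>k. f (s k)) \<longlonglongrightarrow> f y"
    using cont y by (auto intro: continuous_on_tendsto_compose)
  moreover have "(\<lambda>k. f (s k)) \<longlonglongrightarrow> \<delta>"
  proof (rule tendsto_sandwich[OF _ _ tendsto_const LIMSEQ_inverse_real_of_nat_add[of \<delta>]])
    show "\<forall>\<^sub>F k in sequentially. \<delta> \<le> f (s k)"
      using inf_le sC by (intro always_eventually) blast
    show "\<forall>\<^sub>F k in sequentially. f (s k) \<le> \<delta> + inverse (real (Suc k))"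
      using s unfolding \<epsilon>_def by (intro always_eventually allI less_imp_le)
  qed
  ultimately have "f y = \<delta>" by (rule LIMSEQ_unique)
  moreover have "y \<in> closure C" using sC y closure_sequential by blast
  ultimately show ?thesis using inf_le by blast
qed

lemma geo_uniformly_convex_min_variational:
  fixes f :: "'a::metric_space \<Rightarrow> real"
  assumes uc: "geo_uniformly_convex f" and cv: "geo_convex C" and cont: "continuous_on UNIV f"
    and y: "y \<in> closure C" and min: "\<And>c. c \<in> C \<Longrightarrow> f y \<le> f c" and c: "c \<in> closure C"
  shows "f y + (dist y c)\<^sup>2 \<le> f c"
proof -
  obtain ys where ysC: "\<And>k. ys k \<in> C" and ys: "ys \<longlonglongrightarrow> y"
    using y closure_sequential by blast
  have f_tendsto: "(\<lambda>k. f (xs k)) \<longlonglongrightarrow> f x" if "xs \<longlonglongrightarrow> x" for xs x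
    using cont that by (auto intro: continuous_on_tendsto_compose)
  have on_C: "f y + (dist y c)\<^sup>2 \<le> f c" if cC: "c \<in> C" for c
  proof -
    have "(1 - t) * (dist y c)\<^sup>2 \<le> f c - f y" if t: "0 < t" "t \<le> 1" for t
    proof -
      have "f y \<le> (1 - t) * f (ys k) + t * f c - t * (1 - t) * (dist (ys k) c)\<^sup>2" for k
      proof -
        obtain h where h: "geodesic h" "h 0 = ys k" "h 1 = c" "h ` {0..1} \<subseteq> C"
          using cv ysC cC unfolding geo_convex_def by meson
        have "f y \<le> f (h t)" using h(4) t by (intro min) auto
        also have "\<dots> \<le> (1 - t) * f (ys k) + t * f c - t * (1 - t) * (dist (ys k) c)\<^sup>2"
          using geo_uniformly_convexD[OF uc h(1), of t] t h(2,3) by simp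
        finally show ?thesis .
      qed
      moreover have "(\<lambda>k. (1 - t) * f (ys k) + t * f c - t * (1 - t) * (dist (ys k) c)\<^sup>2)
          \<longlonglongrightarrow> (1 - t) * f y + t * f c - t * (1 - t) * (dist y c)\<^sup>2"
        by (intro tendsto_intros f_tendsto ys)
      ultimately have "f y \<le> (1 - t) * f y + t * f c - t * (1 - t) * (dist y c)\<^sup>2"
        by (intro LIMSEQ_le_const) auto
      then have "t * ((1 - t) * (dist y c)\<^sup>2) \<le> t * (f c - f y)"
        by (simp add: algebra_simps)
      then show ?thesis using t by simp
    qed
    then have "(dist y c)\<^sup>2 \<le> f c - f y" by (rule le_if_one_minus_mult_le)
    then show ?thesis by simp
  qed
  obtain cs where csC: "\<And>k. cs k \<in> C" and cs: "cs \<longlonglongrightarrow> c"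
    using c closure_sequential by blast
  have "(\<lambda>k. f y + (dist y (cs k))\<^sup>2) \<longlonglongrightarrow> f y + (dist y c)\<^sup>2"
    by (intro tendsto_intros cs)
  then show ?thesis
    using f_tendsto[OF cs] on_C csC by (intro LIMSEQ_le) auto
qed

lemma NPC_nearest_point:
  fixes x :: "'a::complete_space"
  assumes npc: "NPC_space TYPE('a)" and cv: "geo_convex (C::'a set)"
    and ne: "C \<noteq> {}"
  obtains y where "y \<in> closure C"
    and "\<And>c. c \<in> closure C \<Longrightarrow> (dist x y)\<^sup>2 + (dist y c)\<^sup>2 \<le> (dist x c)\<^sup>2"
proof -
  have uc: "geo_uniformly_convex (\<lambda>z. (dist x z)\<^sup>2)" by (rule NPC_geo_uniformly_convex_dist[OF npc])
  have cont: "continuous_on UNIV (\<lambda>z. (dist x z)\<^sup>2)" by (intro continuous_intros)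
  have "bdd_below ((\<lambda>z. (dist x z)\<^sup>2) ` C)" by (rule bdd_belowI[of _ 0]) auto
  then obtain y where y: "y \<in> closure C" and min: "\<And>c. c \<in> C \<Longrightarrow> (dist x y)\<^sup>2 \<le> (dist x c)\<^sup>2"
    using geo_uniformly_convex_attains_inf[OF uc cv ne cont] by blast
  show ?thesis
    using that[OF y] geo_uniformly_convex_min_variational[OF uc cv cont y min] by simp
qed

lemma dist_le_if_pythagoras:
  assumes "(dist x y)\<^sup>2 + (dist y c)\<^sup>2 \<le> (dist x c)\<^sup>2"
  shows "dist x y \<le> dist x c" and "dist y c \<le> dist x c"
proof -
  have "(dist x y)\<^sup>2 \<le> (dist x c)\<^sup>2" "(dist y c)\<^sup>2 \<le> (dist x c)\<^sup>2"
    using assms zero_le_power2[of "dist x y"] zero_le_power2[of "dist y c"] by linarith+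
  then show "dist x y \<le> dist x c" "dist y c \<le> dist x c"
    using power2_le_imp_le zero_le_dist by blast+
qed

lemma NPC_nearest_point_geodesic:
  fixes x :: "'a::complete_space"
  assumes npc: "NPC_space TYPE('a)" and g: "geodesic (g :: real \<Rightarrow> 'a)"
  obtains y where "y \<in> g ` {0..1}"
    and "\<And>c. c \<in> g ` {0..1} \<Longrightarrow> (dist x y)\<^sup>2 + (dist y c)\<^sup>2 \<le> (dist x c)\<^sup>2"
proof -
  have "closure (g ` {0..1}) = g ` {0..1}" by (rule closure_closed[OF closed_geodesic_image[OF g]])
  moreover have "g ` {0..1} \<noteq> {}" by simp
  ultimately show ?thesis
    using NPC_nearest_point[OF npc geo_convex_geodesic_image[OF g], of x] that by metis
qed

lemma geo_proj_eqI:
  assumes npc: "NPC_space TYPE('a::complete_space)" and g: "geodesic (g :: real \<Rightarrow> 'a)"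
    and y: "y \<in> g ` {0..1}" and near: "\<And>c. c \<in> g ` {0..1} \<Longrightarrow> dist x y \<le> dist x c"
  shows "geo_proj x g = y"
proof -
  obtain y0 where y0: "y0 \<in> g ` {0..1}"
    and pyth: "\<And>c. c \<in> g ` {0..1} \<Longrightarrow> (dist x y0)\<^sup>2 + (dist y0 c)\<^sup>2 \<le> (dist x c)\<^sup>2"
    using NPC_nearest_point_geodesic[OF npc g, where x=x] by metis
  have unique: "y' = y0" if y': "y' \<in> g ` {0..1}" "\<And>c. c \<in> g ` {0..1} \<Longrightarrow> dist x y' \<le> dist x c"
    for y'
  proof -
    have "(dist x y0)\<^sup>2 + (dist y0 y')\<^sup>2 \<le> (dist x y')\<^sup>2" using pyth y'(1) .
    moreover have "(dist x y')\<^sup>2 \<le> (dist x y0)\<^sup>2" using y'(2)[OF y0] by (rule power_mono) simp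
    ultimately have "(dist y0 y')\<^sup>2 \<le> 0" by linarith
    then show ?thesis by simp
  qed
  have "geo_proj x g = y0"
    unfolding geo_proj_def
  proof (rule the_equality)
    show "y0 \<in> g ` {0..1} \<and> (\<forall>z\<in>g ` {0..1}. dist x y0 \<le> dist x z)"
      using y0 pyth dist_le_if_pythagoras(1) by blast
    show "y' = y0" if "y' \<in> g ` {0..1} \<and> (\<forall>z\<in>g ` {0..1}. dist x y' \<le> dist x z)" for y'
      using that by (intro unique) auto
  qed
  with unique[OF y near] show ?thesis by simp
qed

lemma geo_proj_pythagoras:
  assumes npc: "NPC_space TYPE('a::complete_space)" and g: "geodesic (g :: real \<Rightarrow> 'a)"
    and c: "c \<in> g ` {0..1}"
  shows "(dist x (geo_proj x g))\<^sup>2 + (dist (geo_proj x g) c)\<^sup>2 \<le> (dist x c)\<^sup>2"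
proof -
  obtain y where y: "y \<in> g ` {0..1}"
    and pyth: "\<And>c. c \<in> g ` {0..1} \<Longrightarrow> (dist x y)\<^sup>2 + (dist y c)\<^sup>2 \<le> (dist x c)\<^sup>2"
    using NPC_nearest_point_geodesic[OF npc g, where x=x] by metis
  have "geo_proj x g = y"
    using geo_proj_eqI[OF npc g y] pyth dist_le_if_pythagoras(1) by blast
  with pyth[OF c] show ?thesis by simp
qed

lemma dist_geo_proj_le:
  assumes "NPC_space TYPE('a::complete_space)" "geodesic (g :: real \<Rightarrow> 'a)" "c \<in> g ` {0..1}"
  shows "dist (geo_proj x g) c \<le> dist x c"
  using dist_le_if_pythagoras(2)[OF geo_proj_pythagoras[OF assms]] .

section \<open>The minimisers \<open>m\<^sub>n\<close>\<close>

lemma Fn_nonneg: "0 \<le> Fn T n z r"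
  unfolding Fn_def by (simp add: sum_nonneg)

lemma continuous_on_Fn: "continuous_on UNIV (\<lambda>z. Fn T n z r)"
  unfolding Fn_def by (intro continuous_intros)

lemma NPC_geo_uniformly_convex_Fn:
  assumes npc: "NPC_space TYPE('a::metric_space)" and n: "1 \<le> n"
  shows "geo_uniformly_convex (\<lambda>z::'a. Fn T n z r)"
proof -
  have "geo_uniformly_convex (\<lambda>z. (\<Sum>i<n. (dist ((T ^^ i) r) z)\<^sup>2) / card {..<n})"
    using n by (intro geo_uniformly_convex_average NPC_geo_uniformly_convex_dist[OF npc])
      (auto simp: lessThan_empty_iff)
  then show ?thesis by (simp add: Fn_def dist_commute)
qed

lemma mn_variational:
  assumes npc: "NPC_space TYPE('a::complete_space)" and n: "1 \<le> n"
  shows "Fn T n (mn T n r) r + (dist (mn T n r) z)\<^sup>2 \<le> Fn T n (z::'a) r"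
proof -
  note uc = NPC_geo_uniformly_convex_Fn[OF npc n]
  note cv = NPC_geo_convex_UNIV[OF npc]
  obtain y where min: "\<And>c. Fn T n y r \<le> Fn T n c r"
    using geo_uniformly_convex_attains_inf[OF uc cv _ continuous_on_Fn] Fn_nonneg
    by (metis UNIV_I UNIV_not_empty bdd_belowI2)
  have var: "Fn T n y r + (dist y c)\<^sup>2 \<le> Fn T n c r" for c
    using geo_uniformly_convex_min_variational[OF uc cv continuous_on_Fn, of y] min by simp
  have "mn T n r = y"
    unfolding mn_def
  proof (rule the_equality)
    show "\<forall>r'. Fn T n y r \<le> Fn T n r' r" using min by blast
    show "y' = y" if "\<forall>r'. Fn T n y' r \<le> Fn T n r' r" for y'
    proof -
      have "(dist y y')\<^sup>2 \<le> 0" using var[of y'] that[rule_format, of y] by linarith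
      then show ?thesis by simp
    qed
  qed
  with var show ?thesis by simp
qed

lemma mn_dist_le:
  assumes npc: "NPC_space TYPE('a::complete_space)" and n: "1 \<le> n"
    and B: "\<And>i. i < n \<Longrightarrow> dist (z::'a) ((T ^^ i) r) \<le> B"
  shows "dist z (mn T n r) \<le> B"
proof -
  have "0 \<le> B" using B[of 0] n by (meson le_less_trans less_one not_le zero_le_dist)
  have "Fn T n z r \<le> 1 / real n * (\<Sum>i<n. B\<^sup>2)"
    unfolding Fn_def using B by (intro mult_left_mono sum_mono power_mono) auto
  also have "\<dots> = B\<^sup>2" using n by simp
  finally have "(dist z (mn T n r))\<^sup>2 \<le> B\<^sup>2"
    using mn_variational[OF npc n, of T r z] Fn_nonneg[of T n "mn T n r" r]
    by (simp add: dist_commute)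
  then show ?thesis using \<open>0 \<le> B\<close> by (rule power2_le_imp_le)
qed

lemma Fn_pythagoras:
  assumes n: "1 \<le> n"
    and pyth: "\<And>i. (dist m y)\<^sup>2 + (dist y ((T ^^ i) r))\<^sup>2 \<le> (dist m ((T ^^ i) r))\<^sup>2"
  shows "Fn T n y r + (dist m y)\<^sup>2 \<le> Fn T n m r"
proof -
  have "(\<Sum>i<n. (dist y ((T ^^ i) r))\<^sup>2) \<le> (\<Sum>i<n. (dist m ((T ^^ i) r))\<^sup>2 - (dist m y)\<^sup>2)"
    using pyth by (intro sum_mono) (simp add: algebra_simps)
  then have "(\<Sum>i<n. (dist y ((T ^^ i) r))\<^sup>2) + n * (dist m y)\<^sup>2 \<le> (\<Sum>i<n. (dist m ((T ^^ i) r))\<^sup>2)"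
    by (simp add: sum_subtractf)
  then have "((\<Sum>i<n. (dist y ((T ^^ i) r))\<^sup>2) + n * (dist m y)\<^sup>2) / n
      \<le> (\<Sum>i<n. (dist m ((T ^^ i) r))\<^sup>2) / n"
    by (rule divide_right_mono) simp
  then show ?thesis using n by (simp add: Fn_def add_divide_distrib)
qed

lemma mn_in_closure_geo_co:
  assumes npc: "NPC_space TYPE('a::complete_space)" and n: "1 \<le> n"
  shows "mn T n p \<in> closure (geo_co (range (\<lambda>i. (T ^^ i) (p::'a))))"
proof -
  let ?C = "geo_co (range (\<lambda>i. (T ^^ i) p))"
  let ?m = "mn T n p"
  have orbit: "(T ^^ i) p \<in> closure ?C" for i
    using geo_co_superset closure_subset by fast
  obtain y where y: "y \<in> closure ?C"
    and pyth: "\<And>c. c \<in> closure ?C \<Longrightarrow> (dist ?m y)\<^sup>2 + (dist y c)\<^sup>2 \<le> (dist ?m c)\<^sup>2"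
    using NPC_nearest_point[OF npc NPC_geo_convex_geo_co[OF npc], where x="?m"] orbit
    by (metis empty_iff closure_empty)
  have "Fn T n y p + (dist ?m y)\<^sup>2 \<le> Fn T n ?m p"
    using pyth[OF orbit] by (rule Fn_pythagoras[OF n])
  moreover have "Fn T n ?m p + (dist ?m y)\<^sup>2 \<le> Fn T n y p"
    by (rule mn_variational[OF npc n])
  ultimately have "(dist ?m y)\<^sup>2 \<le> 0" by linarith
  then have "?m = y" by simp
  with y show ?thesis by simp
qed

lemma sum_lessThan_add_split:
  fixes a :: "nat \<Rightarrow> 'b::comm_monoid_add"
  shows "(\<Sum>i<m + n. a i) = (\<Sum>i<m. a i) + (\<Sum>i<n. a (i + m))"
  by (induction n) (simp_all add: ac_simps)

lemma sum_lessThan_shift_diff: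
  fixes a :: "nat \<Rightarrow> 'b::ab_group_add"
  shows "(\<Sum>i<n. a (i + k)) - (\<Sum>i<n. a i) = (\<Sum>i<k. a (i + n)) - (\<Sum>i<k. a i)"
  using sum_lessThan_add_split[of a n k] sum_lessThan_add_split[of a k n]
  by (simp add: algebra_simps)

lemma Fn_shift_diff_le:
  assumes B: "\<And>i. (dist z ((T ^^ i) p))\<^sup>2 \<le> B"
  shows "\<bar>Fn T n z ((T ^^ k) p) - Fn T n z p\<bar> \<le> k * B / n"
proof -
  define a where "a i = (dist z ((T ^^ i) p))\<^sup>2" for i
  have bounds: "0 \<le> (\<Sum>i<k. a (i + j))" "(\<Sum>i<k. a (i + j)) \<le> k * B" for j
    using B sum_mono[of "{..<k}" "\<lambda>i. a (i + j)" "\<lambda>i. B"] by (auto simp: a_def sum_nonneg)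
  have "Fn T n z ((T ^^ k) p) - Fn T n z p = ((\<Sum>i<n. a (i + k)) - (\<Sum>i<n. a i)) / n"
    by (simp add: Fn_def a_def funpow_add diff_divide_distrib)
  also have "\<dots> = ((\<Sum>i<k. a (i + n)) - (\<Sum>i<k. a (i + 0))) / n"
    by (simp add: sum_lessThan_shift_diff)
  finally show ?thesis
    using bounds[of n] bounds[of 0] by (simp add: abs_le_iff divide_right_mono)
qed

lemma Fn_apply_le:
  assumes "nonexpansive T"
  shows "Fn T n (T z) p \<le> Fn T n z p + (dist (T z) p)\<^sup>2 / n"
proof (cases n)
  case (Suc k)
  have "(\<Sum>i<k. (dist (T z) ((T ^^ Suc i) p))\<^sup>2) \<le> (\<Sum>i<k. (dist z ((T ^^ i) p))\<^sup>2)"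
    using assms unfolding nonexpansive_def by (intro sum_mono power_mono) auto
  also have "\<dots> \<le> (\<Sum>i<n. (dist z ((T ^^ i) p))\<^sup>2)"
    using Suc by (intro sum_mono2) auto
  finally have "(\<Sum>i<n. (dist (T z) ((T ^^ i) p))\<^sup>2)
      \<le> (dist (T z) p)\<^sup>2 + (\<Sum>i<n. (dist z ((T ^^ i) p))\<^sup>2)"
    using Suc by (simp add: sum.lessThan_Suc_shift del: sum.lessThan_Suc)
  then show ?thesis
    unfolding Fn_def by (simp add: divide_right_mono add_divide_distrib[symmetric] ac_simps)
qed (simp add: Fn_def)

lemma nonexpansive_funpow:
  "nonexpansive T \<Longrightarrow> dist ((T ^^ i) a) ((T ^^ i) b) \<le> dist a b"
  unfolding nonexpansive_def by (induction i) (auto intro: order_trans)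

lemma geo_convex_mn_sublevel:
  assumes npc: "NPC_space TYPE('a::metric_space)" and dc: "distance_convex T" and n: "1 \<le> n"
  shows "geo_convex {s::'a. dist (mn T n s) w \<le> M}"
  unfolding geo_convex_def
proof (intro ballI)
  fix a b assume a: "a \<in> {s. dist (mn T n s) w \<le> M}" and b: "b \<in> {s. dist (mn T n s) w \<le> M}"
  obtain g where g: "geodesic g" "g 0 = a" "g 1 = b" using NPC_geodesic_exists[OF npc] .
  have cv: "convex_on {0..1} (\<lambda>t. (dist (mn T n (g t)) w)\<^sup>2)"
    using dc g(1) n unfolding distance_convex_def by blast
  have "0 \<le> M" using a zero_le_dist order.trans by blast
  have "dist (mn T n (g t)) w \<le> M" if t: "t \<in> {0..1}" for t
  proof -
    have "(dist (mn T n (g ((1 - t) *\<^sub>R 0 + t *\<^sub>R 1))) w)\<^sup>2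
        \<le> (1 - t) * (dist (mn T n (g 0)) w)\<^sup>2 + t * (dist (mn T n (g 1)) w)\<^sup>2"
      using convex_onD[OF cv, of t 0 1] t by simp
    also have "\<dots> \<le> (1 - t) * M\<^sup>2 + t * M\<^sup>2"
      using t a b g(2,3) by (intro add_mono mult_left_mono power_mono) auto
    finally have "(dist (mn T n (g t)) w)\<^sup>2 \<le> M\<^sup>2" by (simp add: algebra_simps)
    then show ?thesis using \<open>0 \<le> M\<close> by (rule power2_le_imp_le)
  qed
  with g show "\<exists>g. geodesic g \<and> g 0 = a \<and> g 1 = b \<and> g ` {0..1} \<subseteq> {s. dist (mn T n s) w \<le> M}"
    by blast
qed

section \<open>Strong, weak and cluster limits\<close>

lemma geodesic_endpoints_in_image: "g 0 \<in> g ` {0..1::real}" "g 1 \<in> g ` {0..1::real}"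
  by auto

lemma LIMSEQ_imp_weak_limit:
  assumes npc: "NPC_space TYPE('a::complete_space)" and x: "x \<longlonglongrightarrow> (q::'a)"
  shows "weak_limit x q"
  unfolding weak_limit_def
proof (intro allI impI)
  fix g assume "geodesic g \<and> q \<in> g ` {0..1}"
  then have le: "dist (geo_proj (x n) g) q \<le> dist (x n) q" for n
    using dist_geo_proj_le[OF npc] by blast
  have "(\<lambda>n. dist (x n) q) \<longlonglongrightarrow> 0" using x by (rule tendsto_dist_iff[THEN iffD1])
  then show "(\<lambda>n. geo_proj (x n) g) \<longlonglongrightarrow> q"
    unfolding tendsto_dist_iff[of _ q]
    by (rule tendsto_sandwich[rotated 2, OF tendsto_const]) (simp_all add: le)
qed

lemma LIMSEQ_imp_weak_cluster_point:
  assumes npc: "NPC_space TYPE('a::complete_space)" and x: "x \<longlonglongrightarrow> (q::'a)"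
  shows "weak_cluster_point x q"
  unfolding weak_cluster_point_def
proof (intro allI impI)
  fix U assume "open U \<and> q \<in> U"
  then obtain e where e: "0 < e" "ball q e \<subseteq> U" using open_contains_ball by blast
  then obtain N where N: "\<And>n. n \<ge> N \<Longrightarrow> dist (x n) q < e"
    using x unfolding lim_sequentially by blast
  have "geo_proj (x n) g \<in> U" if "n \<ge> N" "geodesic g" "q \<in> g ` {0..1}" for n g
    using dist_geo_proj_le[OF npc that(2,3), of "x n"] N[OF that(1)] e(2)
    by (auto simp: dist_commute)
  then have "{N..} \<subseteq> {n. \<forall>g. geodesic g \<and> q \<in> g ` {0..1} \<longrightarrow> geo_proj (x n) g \<in> U}"
    by auto
  then show "infinite {n. \<forall>g. geodesic g \<and> q \<in> g ` {0..1} \<longrightarrow> geo_proj (x n) g \<in> U}"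
    using infinite_Ici by (rule infinite_super)
qed

lemma weak_cluster_point_frequently_near:
  assumes npc: "NPC_space TYPE('a::complete_space)" and wc: "weak_cluster_point x (q::'a)"
    and e: "0 < e"
  shows "\<exists>\<^sub>F n in sequentially. dist (x n) q < e"
  unfolding frequently_sequentially
proof
  fix N
  have "open (ball q e) \<and> q \<in> ball q e" using e by simp
  then have "infinite {n. \<forall>g. geodesic g \<and> q \<in> g ` {0..1} \<longrightarrow> geo_proj (x n) g \<in> ball q e}"
    using wc unfolding weak_cluster_point_def by blast
  then obtain n where n: "n \<ge> N"
    and proj: "\<And>g. geodesic g \<Longrightarrow> q \<in> g ` {0..1} \<Longrightarrow> geo_proj (x n) g \<in> ball q e"
    unfolding infinite_nat_iff_unbounded_le by blast
  obtain g where g: "geodesic g" "g 0 = q" "g 1 = x n" using NPC_geodesic_exists[OF npc] .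
  have q: "q \<in> g ` {0..1}" and xn: "x n \<in> g ` {0..1}"
    using geodesic_endpoints_in_image[of g] g(2,3) by simp_all
  have "geo_proj (x n) g = x n" by (rule geo_proj_eqI[OF npc g(1) xn]) simp
  then have "x n \<in> ball q e" using proj[OF g(1) q] by simp
  with n show "\<exists>n\<ge>N. dist (x n) q < e" by (auto simp: dist_commute)
qed

lemma frequently_near_fixed_point:
  assumes ne: "nonexpansive T" and approx: "(\<lambda>n. dist (T (x n)) (x n)) \<longlonglongrightarrow> 0"
    and near: "\<And>e. 0 < e \<Longrightarrow> \<exists>\<^sub>F n in sequentially. dist (x n) q < e"
  shows "T q = q"
proof (rule ccontr)
  assume "T q \<noteq> q"
  then have e: "0 < dist (T q) q / 3" by simp
  have "\<forall>\<^sub>F n in sequentially. dist (T (x n)) (x n) < dist (T q) q / 3"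
    using approx e by (rule order_tendstoD(2))
  then obtain n where n: "dist (T (x n)) (x n) < dist (T q) q / 3" "dist (x n) q < dist (T q) q / 3"
    using frequently_eventually_conj[OF near[OF e]] by (auto dest: frequently_ex)
  have "dist (T q) q \<le> dist (T q) (T (x n)) + dist (T (x n)) (x n) + dist (x n) q"
    by (metis add.commute add_left_mono dist_triangle order_trans)
  moreover have "dist (T q) (T (x n)) \<le> dist (x n) q"
    using ne unfolding nonexpansive_def by (metis dist_commute)
  ultimately show False using n by linarith
qed

lemma frequently_near_in_closure:
  assumes "\<And>n. x n \<in> K" and near: "\<And>e. 0 < e \<Longrightarrow> \<exists>\<^sub>F n in sequentially. dist (x n) q < e"
  shows "q \<in> closure K"
  unfolding closure_approachable using assms frequently_ex by blast

lemma geo_proj_eq_nearest_point: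
  fixes q :: "'a::complete_space"
  assumes npc: "NPC_space TYPE('a)" and cv: "geo_convex C" and y: "y \<in> closure C"
    and pyth: "\<And>c. c \<in> closure C \<Longrightarrow> (dist q y)\<^sup>2 + (dist y c)\<^sup>2 \<le> (dist q c)\<^sup>2"
    and g: "geodesic g" "g 0 = y" "g 1 = q" and c: "c \<in> closure C"
  shows "geo_proj c g = y"
proof (rule geo_proj_eqI[OF npc g(1)])
  show "y \<in> g ` {0..1}" using geodesic_endpoints_in_image(1)[of g] g(2) by simp
  fix z assume "z \<in> g ` {0..1}"
  then obtain t where t: "t \<in> {0..1}" "z = g t" by auto
  have "C \<noteq> {}" using y by auto
  then obtain y' where y': "y' \<in> closure C"
    and pyth': "\<And>c. c \<in> closure C \<Longrightarrow> (dist z y')\<^sup>2 + (dist y' c)\<^sup>2 \<le> (dist z c)\<^sup>2"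
    using NPC_nearest_point[OF npc cv] by metis
  \<comment> \<open>\<open>y'\<close> is no farther from \<open>q\<close> than \<open>y\<close>, so it is \<open>y\<close>: the segment from \<open>y\<close> to \<open>q\<close> projects onto \<open>y\<close>\<close>
  have "dist q y' \<le> dist q z + dist z y'" by (rule dist_triangle)
  also have "\<dots> \<le> dist q z + dist z y" using dist_le_if_pythagoras(1)[OF pyth'[OF y]] by simp
  also have "\<dots> = dist q y"
    using geodesic_dist_start[OF g(1) t(1)] geodesic_dist_end[OF g(1) t(1)] g(2,3) t(2)
    by (simp add: dist_commute algebra_simps)
  finally have "(dist q y')\<^sup>2 \<le> (dist q y)\<^sup>2" by (rule power_mono) simp
  with pyth[OF y'] have "(dist y y')\<^sup>2 \<le> 0" by linarith
  then have "y' = y" by simp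
  then show "dist c y \<le> dist c z"
    using dist_le_if_pythagoras(2)[OF pyth'[OF c]] by (simp add: dist_commute)
qed

lemma weak_limit_in_closure_geo_convex:
  fixes q :: "'a::complete_space"
  assumes npc: "NPC_space TYPE('a)" and cv: "geo_convex C"
    and x: "\<And>n. x n \<in> closure C" and wl: "weak_limit x q"
  shows "q \<in> closure C"
proof -
  have "C \<noteq> {}" using x by auto
  then obtain y where y: "y \<in> closure C"
    and pyth: "\<And>c. c \<in> closure C \<Longrightarrow> (dist q y)\<^sup>2 + (dist y c)\<^sup>2 \<le> (dist q c)\<^sup>2"
    using NPC_nearest_point[OF npc cv] by metis
  obtain g where g: "geodesic g" "g 0 = y" "g 1 = q" using NPC_geodesic_exists[OF npc] .
  have "q \<in> g ` {0..1}" using geodesic_endpoints_in_image(2)[of g] g(3) by simp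
  then have "(\<lambda>n. geo_proj (x n) g) \<longlonglongrightarrow> q" using wl g(1) unfolding weak_limit_def by blast
  moreover have "geo_proj (x n) g = y" for n
    by (rule geo_proj_eq_nearest_point[OF npc cv y pyth g x])
  ultimately have "y = q" by (simp add: LIMSEQ_const_iff)
  with y show ?thesis by simp
qed

text \<open>With \<open>\<pi>\<close> the projection of \<open>x\<close> onto the geodesic from \<open>q\<close> to \<open>T q\<close>, the variables stand for
  \<open>a = d(x,q)\<close>, \<open>b = d(x,\<pi>)\<close>, \<open>c = d(\<pi>,T q)\<close>, \<open>d = d(T x,x)\<close>, \<open>e = d(\<pi>,q)\<close>, \<open>L = d(q,T q)\<close>.\<close>
lemma demiclosedness_estimate:
  fixes a b c d e A L :: real
  assumes "0 \<le> a" "a \<le> A" "0 \<le> b" "0 \<le> c" "0 \<le> d" "0 \<le> e" "e \<le> L"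
    and "a \<le> b + e" "L \<le> e + c" "c\<^sup>2 \<le> (d + a)\<^sup>2 - b\<^sup>2"
  shows "(L - e)\<^sup>2 \<le> (d + e) * (2 * A + d + e)"
proof -
  have "(L - e)\<^sup>2 \<le> c\<^sup>2" using assms by (intro power_mono) auto
  show ?thesis
  proof (cases "e \<le> a")
    case True
    have "(a - e)\<^sup>2 \<le> b\<^sup>2" using assms True by (intro power_mono) auto
    with \<open>(L - e)\<^sup>2 \<le> c\<^sup>2\<close> assms(10) have "(L - e)\<^sup>2 \<le> (d + a)\<^sup>2 - (a - e)\<^sup>2" by linarith
    also have "\<dots> = (d + e) * (2 * a + d - e)" by (simp add: power2_eq_square algebra_simps)
    also have "\<dots> \<le> (d + e) * (2 * A + d + e)" using assms by (intro mult_left_mono) auto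
    finally show ?thesis .
  next
    case False
    have "(L - e)\<^sup>2 \<le> (d + a)\<^sup>2"
      using \<open>(L - e)\<^sup>2 \<le> c\<^sup>2\<close> assms(10) zero_le_power2[of b] by linarith
    also have "\<dots> \<le> (d + e) * (d + e)" using assms False by (simp add: power2_eq_square mult_mono)
    also have "\<dots> \<le> (d + e) * (2 * A + d + e)" using assms by (intro mult_left_mono) auto
    finally show ?thesis .
  qed
qed

lemma weak_limit_approx_fixed_point:
  fixes q :: "'a::complete_space"
  assumes npc: "NPC_space TYPE('a)" and ne: "nonexpansive T" and bdd: "bounded (range x)"
    and approx: "(\<lambda>n. dist (T (x n)) (x n)) \<longlonglongrightarrow> 0" and wl: "weak_limit x q"
  shows "T q = q"
proof (rule ccontr)
  assume "T q \<noteq> q"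
  obtain g where g: "geodesic g" "g 0 = q" "g 1 = T q" using NPC_geodesic_exists[OF npc] .
  have q: "q \<in> g ` {0..1}" and Tq: "T q \<in> g ` {0..1}"
    using geodesic_endpoints_in_image[of g] g(2,3) by simp_all
  obtain A where A: "\<And>n. dist (x n) q \<le> A"
    using bdd bounded_any_center[of "range x" q] by (auto simp: dist_commute)
  define L where "L = dist q (T q)"
  define \<pi> where "\<pi> n = geo_proj (x n) g" for n
  define e where "e n = dist (\<pi> n) q" for n
  define d where "d n = dist (T (x n)) (x n)" for n
  have "0 < L" using \<open>T q \<noteq> q\<close> by (simp add: L_def)
  have "e \<longlonglongrightarrow> 0"
    using wl g(1) q unfolding weak_limit_def e_def \<pi>_def by (intro tendsto_dist_iff[THEN iffD1]) blast
  then have "\<forall>\<^sub>F n in sequentially. e n < L" using \<open>0 < L\<close> by (rule order_tendstoD(2))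
  moreover have "(L - e n)\<^sup>2 \<le> (d n + e n) * (2 * A + d n + e n)" if "e n < L" for n
  proof (rule demiclosedness_estimate)
    show "dist (x n) q \<le> A" "e n \<le> L" using A that by simp_all
    show "dist (x n) q \<le> dist (x n) (\<pi> n) + e n" unfolding e_def by (rule dist_triangle)
    show "L \<le> e n + dist (\<pi> n) (T q)" unfolding L_def e_def by (metis dist_commute dist_triangle)
    have "dist (x n) (T q) \<le> d n + dist (x n) q"
      using dist_triangle[of "x n" "T q" "T (x n)"] ne
      unfolding d_def nonexpansive_def by (metis add_left_mono dist_commute order_trans)
    then have "(dist (x n) (T q))\<^sup>2 \<le> (d n + dist (x n) q)\<^sup>2" by (rule power_mono) simp
    then show "(dist (\<pi> n) (T q))\<^sup>2 \<le> (d n + dist (x n) q)\<^sup>2 - (dist (x n) (\<pi> n))\<^sup>2"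
      using geo_proj_pythagoras[OF npc g(1) Tq, of "x n"] unfolding \<pi>_def by linarith
  qed (simp_all add: d_def e_def)
  ultimately have "\<forall>\<^sub>F n in sequentially. (L - e n)\<^sup>2 \<le> (d n + e n) * (2 * A + d n + e n)"
    by (auto elim: eventually_mono)
  moreover have "(\<lambda>n. (L - e n)\<^sup>2) \<longlonglongrightarrow> (L - 0)\<^sup>2"
    using \<open>e \<longlonglongrightarrow> 0\<close> by (intro tendsto_intros)
  moreover have "(\<lambda>n. (d n + e n) * (2 * A + d n + e n)) \<longlonglongrightarrow> (0 + 0) * (2 * A + 0 + 0)"
    using \<open>e \<longlonglongrightarrow> 0\<close> approx unfolding d_def by (intro tendsto_intros)
  ultimately have "(L - 0)\<^sup>2 \<le> (0 + 0) * (2 * A + 0 + 0)" by (intro tendsto_le) auto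
  with \<open>0 < L\<close> show False by simp
qed

section \<open>Means along a bounded orbit\<close>

lemma LIMSEQ_zero_if_square_le_inverse:
  fixes f :: "nat \<Rightarrow> real"
  assumes "\<And>n. 0 \<le> f n" "\<And>n. (f n)\<^sup>2 \<le> C / real (Suc n)"
  shows "f \<longlonglongrightarrow> 0"
proof (rule tendsto_sandwich[of "\<lambda>n. 0" _ _ "\<lambda>n. sqrt (C / real (Suc n))"])
  show "\<forall>\<^sub>F n in sequentially. 0 \<le> f n" using assms(1) by simp
  show "\<forall>\<^sub>F n in sequentially. f n \<le> sqrt (C / real (Suc n))"
    using assms(2) real_le_rsqrt by (intro always_eventually allI) blast
  have "(\<lambda>n. C * inverse (real (Suc n))) \<longlonglongrightarrow> C * 0"
    by (intro tendsto_mult tendsto_const LIMSEQ_inverse_real_of_nat)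
  then show "(\<lambda>n. sqrt (C / real (Suc n))) \<longlonglongrightarrow> 0"
    using tendsto_real_sqrt by (fastforce simp: divide_inverse)
qed simp

locale NPC_bounded_orbit =
  fixes T :: "'a::complete_space \<Rightarrow> 'a" and p :: 'a and R :: real
  assumes npc: "NPC_space TYPE('a)" and nonexp: "nonexpansive T"
    and orbit_bound: "\<And>i. dist p ((T ^^ i) p) \<le> R"
begin

abbreviation orbit_hull :: "'a set" where
  "orbit_hull \<equiv> closure (geo_co (range (\<lambda>i. (T ^^ i) p)))"

abbreviation orbit_means :: "nat \<Rightarrow> 'a" where
  "orbit_means \<equiv> \<lambda>n. mn T (Suc n) p"

lemma dist_mn_shift_le: "1 \<le> n \<Longrightarrow> dist p (mn T n ((T ^^ k) p)) \<le> R"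
  using orbit_bound[of "_ + k"] by (intro mn_dist_le[OF npc]) (simp_all add: funpow_add)

lemma dist_orbit_le: "dist p z \<le> R \<Longrightarrow> dist z ((T ^^ i) p) \<le> 2 * R"
  using dist_triangle3[of z "(T ^^ i) p" p] orbit_bound[of i] by simp

lemma dist_mn_shift_sq_le:
  assumes n: "1 \<le> n"
  shows "(dist (mn T n p) (mn T n ((T ^^ k) p)))\<^sup>2 \<le> k * (2 * R)\<^sup>2 / n"
proof -
  define m where "m = mn T n p"
  define m' where "m' = mn T n ((T ^^ k) p)"
  have shift_le: "\<bar>Fn T n z ((T ^^ k) p) - Fn T n z p\<bar> \<le> k * (2 * R)\<^sup>2 / n" if "dist p z \<le> R" for z
    using dist_orbit_le[OF that] by (intro Fn_shift_diff_le power_mono) auto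
  have "Fn T n m p + (dist m m')\<^sup>2 \<le> Fn T n m' p"
    using mn_variational[OF npc n] unfolding m_def .
  moreover have "Fn T n m' ((T ^^ k) p) + (dist m m')\<^sup>2 \<le> Fn T n m ((T ^^ k) p)"
    using mn_variational[OF npc n] unfolding m'_def by (simp add: dist_commute)
  moreover have "dist p m \<le> R" "dist p m' \<le> R"
    using dist_mn_shift_le[OF n, of 0] dist_mn_shift_le[OF n, of k] by (simp_all add: m_def m'_def)
  note this[THEN shift_le, unfolded abs_le_iff]
  ultimately show ?thesis
    unfolding m_def m'_def by linarith
qed

lemma mn_shift_tendsto: "(\<lambda>n. dist (mn T (Suc n) ((T ^^ k) p)) (orbit_means n)) \<longlonglongrightarrow> 0"
proof (rule LIMSEQ_zero_if_square_le_inverse)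
  show "(dist (mn T (Suc n) ((T ^^ k) p)) (orbit_means n))\<^sup>2 \<le> k * (2 * R)\<^sup>2 / real (Suc n)" for n
    using dist_mn_shift_sq_le[of "Suc n" k] by (simp add: dist_commute)
qed simp

lemma dist_T_mn_sq_le:
  assumes n: "1 \<le> n"
  shows "(dist (T (mn T n p)) (mn T n p))\<^sup>2 \<le> (2 * R)\<^sup>2 / n"
proof -
  define m where "m = mn T n p"
  have "dist (T m) p \<le> dist (T m) (T p) + dist (T p) p" by (rule dist_triangle)
  moreover have "dist (T m) (T p) \<le> dist p m"
    using nonexp unfolding nonexpansive_def by (metis dist_commute)
  moreover have "dist p m \<le> R" using dist_mn_shift_le[OF n, of 0] by (simp add: m_def)
  moreover have "dist (T p) p \<le> R" using orbit_bound[of 1] by (simp add: dist_commute)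
  ultimately have "dist (T m) p \<le> 2 * R" by linarith
  then have "(dist (T m) p)\<^sup>2 \<le> (2 * R)\<^sup>2" by (rule power_mono) simp
  then have "(dist (T m) p)\<^sup>2 / n \<le> (2 * R)\<^sup>2 / n" by (rule divide_right_mono) simp
  moreover have "Fn T n m p + (dist m (T m))\<^sup>2 \<le> Fn T n (T m) p"
    using mn_variational[OF npc n] unfolding m_def .
  moreover have "Fn T n (T m) p \<le> Fn T n m p + (dist (T m) p)\<^sup>2 / n"
    by (rule Fn_apply_le[OF nonexp])
  ultimately show ?thesis unfolding m_def by (simp add: dist_commute)
qed

lemma T_mn_tendsto: "(\<lambda>n. dist (T (orbit_means n)) (orbit_means n)) \<longlonglongrightarrow> 0"
  using dist_T_mn_sq_le[of "Suc _"]
  by (intro LIMSEQ_zero_if_square_le_inverse[where C="(2 * R)\<^sup>2"]) simp_all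

lemma mn_tendsto_fixed_point:
  assumes dc: "distance_convex T" and fixed: "T q = q" and q: "q \<in> orbit_hull"
  shows "orbit_means \<longlonglongrightarrow> q"
proof (rule metric_LIMSEQ_I)
  fix e :: real assume "0 < e"
  then obtain r where r: "r \<in> geo_co (range (\<lambda>i. (T ^^ i) p))" "dist r q < e / 2"
    using q unfolding closure_approachable by (meson half_gt_zero)
  obtain N where N: "r \<in> geo_co ((\<lambda>i. (T ^^ i) p) ` {..N})"
    using geo_co_range_finite_stage[OF npc r(1)] by blast
  define M where "M n = (\<Sum>k\<le>N. dist (mn T (Suc n) ((T ^^ k) p)) (orbit_means n))" for n
  have "M \<longlonglongrightarrow> (\<Sum>k\<le>N. 0)" unfolding M_def by (intro tendsto_sum mn_shift_tendsto)
  then have "\<forall>\<^sub>F n in sequentially. M n < e / 2" using \<open>0 < e\<close> by (intro order_tendstoD(2)) auto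
  then obtain n0 where n0: "\<And>n. n \<ge> n0 \<Longrightarrow> M n < e / 2" unfolding eventually_sequentially by blast
  have "dist (orbit_means n) q < e" if "n \<ge> n0" for n
  proof -
    have "(\<lambda>i. (T ^^ i) p) ` {..N} \<subseteq> {s. dist (mn T (Suc n) s) (orbit_means n) \<le> M n}"
    proof (rule image_subsetI)
      fix k assume "k \<in> {..N}"
      then have "dist (mn T (Suc n) ((T ^^ k) p)) (orbit_means n) \<le> M n"
        unfolding M_def by (rule member_le_sum) simp_all
      then show "(T ^^ k) p \<in> {s. dist (mn T (Suc n) s) (orbit_means n) \<le> M n}" by simp
    qed
    moreover have "geo_convex {s. dist (mn T (Suc n) s) (orbit_means n) \<le> M n}"
      by (rule geo_convex_mn_sublevel[OF npc dc]) simp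
    ultimately have "r \<in> {s. dist (mn T (Suc n) s) (orbit_means n) \<le> M n}"
      using geo_co_least N by blast
    moreover have "dist q (mn T (Suc n) r) \<le> dist q r"
    proof (rule mn_dist_le[OF npc])
      fix i
      have "(T ^^ i) q = q" using fixed by (induction i) simp_all
      then show "dist q ((T ^^ i) r) \<le> dist q r"
        using nonexpansive_funpow[OF nonexp, of i q r] by simp
    qed simp
    ultimately show ?thesis
      using dist_triangle3[of "orbit_means n" q "mn T (Suc n) r"] r(2) n0[OF that]
      by (simp add: dist_commute)
  qed
  then show "\<exists>n0. \<forall>n\<ge>n0. dist (orbit_means n) q < e" by blast
qed

lemma orbit_means_cluster_point_imp_fixed:
  assumes "\<And>e. 0 < e \<Longrightarrow> \<exists>\<^sub>F n in sequentially. dist (orbit_means n) q < e"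
  shows "T q = q \<and> q \<in> orbit_hull"
  using frequently_near_fixed_point[OF nonexp T_mn_tendsto assms]
    frequently_near_in_closure[OF mn_in_closure_geo_co[OF npc] assms] by simp

lemma orbit_means_tendsto_imp_fixed:
  assumes "orbit_means \<longlonglongrightarrow> q"
  shows "T q = q \<and> q \<in> orbit_hull"
proof (rule orbit_means_cluster_point_imp_fixed)
  fix e :: real assume "0 < e"
  with assms have "\<forall>\<^sub>F n in sequentially. dist (orbit_means n) q < e" by (rule tendstoD)
  then show "\<exists>\<^sub>F n in sequentially. dist (orbit_means n) q < e" by (simp add: eventually_frequently)
qed

lemma weak_limit_orbit_means_imp_fixed:
  assumes "weak_limit orbit_means q"
  shows "T q = q \<and> q \<in> orbit_hull"
proof
  have "dist p (orbit_means n) \<le> R" for n using dist_mn_shift_le[of "Suc n" 0] by simp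
  then have "bounded (range orbit_means)" unfolding bounded_def by blast
  then show "T q = q"
    using weak_limit_approx_fixed_point[OF npc nonexp _ T_mn_tendsto assms] by blast
  show "q \<in> orbit_hull"
    using weak_limit_in_closure_geo_convex[OF npc NPC_geo_convex_geo_co[OF npc]
        mn_in_closure_geo_co[OF npc] assms] by simp
qed

end

theorem mainTheorem1:
  fixes T :: "'a::complete_space \<Rightarrow> 'a" and p q :: 'a
  assumes "NPC_space TYPE('a)"
    and "nonexpansive T"
    and "distance_convex T"
    and "bounded (range (\<lambda>i. (T ^^ i) p))"
  shows "((T q = q \<and> q \<in> closure (geo_co (range (\<lambda>i. (T ^^ i) p))))
            \<longleftrightarrow> (\<lambda>n. mn T (Suc n) p) \<longlonglongrightarrow> q)
       \<and> ((\<lambda>n. mn T (Suc n) p) \<longlonglongrightarrow> q \<longleftrightarrow> weak_limit (\<lambda>n. mn T (Suc n) p) q)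
       \<and> (weak_limit (\<lambda>n. mn T (Suc n) p) q \<longleftrightarrow> weak_cluster_point (\<lambda>n. mn T (Suc n) p) q)"
proof -
  obtain R where "\<forall>y\<in>range (\<lambda>i. (T ^^ i) p). dist p y \<le> R"
    using assms(4) bounded_any_center by blast
  then interpret NPC_bounded_orbit T p R
    using assms(1,2) by unfold_locales auto
  note fixed_imp_strong = mn_tendsto_fixed_point[OF assms(3)]
  have "T q = q \<and> q \<in> orbit_hull \<longleftrightarrow> orbit_means \<longlonglongrightarrow> q"
    using orbit_means_tendsto_imp_fixed fixed_imp_strong by blast
  moreover have "orbit_means \<longlonglongrightarrow> q \<longleftrightarrow> weak_limit orbit_means q"
    using LIMSEQ_imp_weak_limit[OF npc] weak_limit_orbit_means_imp_fixed fixed_imp_strong by blast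
  moreover have "weak_cluster_point orbit_means q \<longrightarrow> orbit_means \<longlonglongrightarrow> q"
    using orbit_means_cluster_point_imp_fixed[OF weak_cluster_point_frequently_near[OF npc]]
      fixed_imp_strong by blast
  ultimately show ?thesis
    using LIMSEQ_imp_weak_cluster_point[OF npc] by blast
qed

end
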